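(* Assume $\Gamma^{orb}$ is a bamboo with nodes $n_1,\dots,n_k$ in order along it. Let $\alpha\in\mathbb R_{\ge0}\langle\mathfrak v_1,\dots,\mathfrak v_k\rangle$ and let $\beta=\sum_{\ell=1}^k\beta_\ell E_{n_\ell}\in\alpha-\mathbb R_{\ge0}\langle\mathfrak v_1,\mathfrak v_k\rangle$ be such that not all $\beta_\ell$ are negative. Then there exist $1\le i\le j\le k$ such that $$\beta_1,\dots,\beta_{i-1}<0,\qquad \beta_i,\dots,\beta_j\ge0,\qquad \beta_{j+1},\dots,\beta_k<0.$$
   Context: $\Gamma$ is a connected negative definite plumbing graph which is a tree with all genera $0$; $\mathcal N$ is its set of nodes (vertices of valency $\ge3$). $L=\bigoplus\mathbb ZE_v$ with the intersection form, and $E_v^*\in L\otimes\mathbb Q$ is defined by $(E^*_v,E_w)=-\delta_{vw}$. The orbifold graph $\Gamma^{orb}$ has vertex set $\mathcal N$, with $n,n'$ adjacent iff the path between them in $\Gamma$ has only valency-$2$ interior vertices; bamboo means no vertex of valency $\ge3$. $\pi_{\mathcal N}$ is the projection of $L\otimes\mathbb R$ onto $\bigoplus_{n\in\mathcal N}\mathbb RE_n$ forgetting non-node coordinates, and $\mathfrak v_i:=\pi_{\mathcal N}(E^*_{n_i})=\sum_\ell -(E^*_{n_i},E^*_{n_\ell})E_{n_\ell}$ (all coordinates positive). *)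

theory Defs
  imports Complex_Main
begin

text \<open>A plumbing graph: finite vertex set V, symmetric irreflexive adjacency adj on V,
  Euler numbers (self-intersections) e. Genera are all 0 and play no role in the form.\<close>

definition graph_on :: "'v set \<Rightarrow> ('v \<Rightarrow> 'v \<Rightarrow> bool) \<Rightarrow> bool" where
  "graph_on V adj \<longleftrightarrow> finite V \<and> (\<forall>u w. adj u w \<longrightarrow> u \<in> V \<and> w \<in> V)
     \<and> (\<forall>u w. adj u w \<longrightarrow> adj w u) \<and> (\<forall>u. \<not> adj u u)"

definition is_path :: "('v \<Rightarrow> 'v \<Rightarrow> bool) \<Rightarrow> 'v list \<Rightarrow> 'v \<Rightarrow> 'v \<Rightarrow> bool" where
  "is_path adj p u w \<longleftrightarrow> p \<noteq> [] \<and> hd p = u \<and> last p = w \<and> distinct p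
     \<and> (\<forall>i. Suc i < length p \<longrightarrow> adj (p ! i) (p ! Suc i))"

definition is_tree :: "'v set \<Rightarrow> ('v \<Rightarrow> 'v \<Rightarrow> bool) \<Rightarrow> bool" where
  "is_tree V adj \<longleftrightarrow> graph_on V adj \<and> V \<noteq> {} \<and>
     (\<forall>u\<in>V. \<forall>w\<in>V. \<exists>!p. is_path adj p u w)"

definition valency :: "'v set \<Rightarrow> ('v \<Rightarrow> 'v \<Rightarrow> bool) \<Rightarrow> 'v \<Rightarrow> nat" where
  "valency V adj v = card {w \<in> V. adj v w}"

definition nodes :: "'v set \<Rightarrow> ('v \<Rightarrow> 'v \<Rightarrow> bool) \<Rightarrow> 'v set" where
  "nodes V adj = {v \<in> V. valency V adj v \<ge> 3}"

definition orb_adj :: "'v set \<Rightarrow> ('v \<Rightarrow> 'v \<Rightarrow> bool) \<Rightarrow> 'v \<Rightarrow> 'v \<Rightarrow> bool" where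
  "orb_adj V adj n n' \<longleftrightarrow> n \<in> nodes V adj \<and> n' \<in> nodes V adj \<and> n \<noteq> n' \<and>
     (\<forall>p. is_path adj p n n' \<longrightarrow>
        (\<forall>i. 0 < i \<and> i < length p - 1 \<longrightarrow> valency V adj (p ! i) = 2))"

definition int_form :: "('v \<Rightarrow> 'v \<Rightarrow> bool) \<Rightarrow> ('v \<Rightarrow> int) \<Rightarrow> 'v \<Rightarrow> 'v \<Rightarrow> real" where
  "int_form adj e u w = (if u = w then real_of_int (e u) else if adj u w then 1 else 0)"

text \<open>Bilinear extension to L \<otimes> R, vectors given by coordinates 'v \<Rightarrow> real on V.\<close>
definition pair :: "'v set \<Rightarrow> ('v \<Rightarrow> 'v \<Rightarrow> bool) \<Rightarrow> ('v \<Rightarrow> int) \<Rightarrow> ('v \<Rightarrow> real) \<Rightarrow> ('v \<Rightarrow> real) \<Rightarrow> real" where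
  "pair V adj e x y = (\<Sum>u\<in>V. \<Sum>w\<in>V. x u * y w * int_form adj e u w)"

definition neg_definite :: "'v set \<Rightarrow> ('v \<Rightarrow> 'v \<Rightarrow> bool) \<Rightarrow> ('v \<Rightarrow> int) \<Rightarrow> bool" where
  "neg_definite V adj e \<longleftrightarrow> (\<forall>x. (\<exists>v\<in>V. x v \<noteq> 0) \<longrightarrow> pair V adj e x x < 0)"

definition basisE :: "'v \<Rightarrow> 'v \<Rightarrow> real" where
  "basisE w = (\<lambda>u. if u = w then 1 else 0)"

definition dualE :: "'v set \<Rightarrow> ('v \<Rightarrow> 'v \<Rightarrow> bool) \<Rightarrow> ('v \<Rightarrow> int) \<Rightarrow> 'v \<Rightarrow> 'v \<Rightarrow> real" where
  "dualE V adj e v = (THE c. (\<forall>u. u \<notin> V \<longrightarrow> c u = 0) \<and>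
      (\<forall>w\<in>V. pair V adj e c (basisE w) = - (if v = w then 1 else 0)))"

text \<open>v_frak n = pi_N(E_n^*) = sum over nodes m of -(E_n^*, E_m^*) E_m
  (coordinates on nodes; zero elsewhere).\<close>
definition vfrak :: "'v set \<Rightarrow> ('v \<Rightarrow> 'v \<Rightarrow> bool) \<Rightarrow> ('v \<Rightarrow> int) \<Rightarrow> 'v \<Rightarrow> 'v \<Rightarrow> real" where
  "vfrak V adj e n = (\<lambda>m. if m \<in> nodes V adj
      then - pair V adj e (dualE V adj e n) (dualE V adj e m) else 0)"

end

(* Write y = sum_l a_l E*_{n_l} - b_1 E*_{n_1} - b_k E*_{n_k}, so that beta is the restriction of y
   to the nodes. Pairing with E_w gives (y, E_w) = -a_w <= 0 at every vertex w other than the two end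
   nodes: y is superharmonic there. Suppose beta were >= 0 at n_p and n_r but < 0 at some n_q with
   p < q < r, and let S be the set of vertices joined to n_q by a path avoiding n_p and n_r. Since the
   orbifold graph is a bamboo, S contains neither end node, and every neighbour of S outside S is
   n_p or n_r, where y >= 0. For the truncation w = min(y, 0) on S one then gets
   (w, w) >= (w, y) >= 0 although w(n_q) < 0, contradicting negative definiteness. Hence the set of
   indices where beta >= 0 is an interval. *)

theory Submission
  imports Defs "HOL-Library.Function_Algebras"
begin

(* Functions 'v \<Rightarrow> real carry no real_vector instance, so their vector space structure is
   set up explicitly; the coordinate vectors on V span those supported on V. *)
definition sc :: "real \<Rightarrow> ('v \<Rightarrow> real) \<Rightarrow> 'v \<Rightarrow> real" where
  "sc r x = (\<lambda>u. r * x u)"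

interpretation fvs: vector_space "sc :: real \<Rightarrow> ('v \<Rightarrow> real) \<Rightarrow> _"
  by unfold_locales (auto simp: sc_def fun_eq_iff algebra_simps)

lemma (in vector_space) span_subset_image_of_inj_on_span:
  assumes lin: "Vector_Spaces.linear scale scale f" and fin: "finite B" and ind: "independent B"
    and maps: "f ` B \<subseteq> span B" and inj: "inj_on f (span B)"
  shows "span B \<subseteq> f ` span B"
proof
  interpret f: Vector_Spaces.linear scale scale f by (rule lin)
  fix z assume z: "z \<in> span B"
  have ind_fB: "independent (f ` B)"
    using f.independent_injective_image[OF ind inj] .
  have card_fB: "card (f ` B) = card B"
    using card_image[OF inj_on_subset[OF inj span_superset]] .
  have "z \<in> span (f ` B)"
  proof (rule ccontr)
    assume z_out: "z \<notin> span (f ` B)"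
    then have "z \<notin> f ` B" using span_base by blast
    then have "card (insert z (f ` B)) = card B + 1"
      using card_fB fin by simp
    moreover have "card (insert z (f ` B)) \<le> card B"
      using independent_span_bound[OF fin independent_insertI[OF z_out ind_fB]] maps z by simp
    ultimately show False by simp
  qed
  then show "z \<in> f ` span B" using f.span_image by simp
qed

lemma sum_fun_apply: "(\<Sum>i\<in>A. f i) x = (\<Sum>i\<in>A. f i x)"
  by (induction A rule: infinite_finite_induct) auto

lemma span_basisE:
  fixes V :: "'v set"
  assumes "finite V"
  shows "fvs.span (basisE ` V) = {x. \<forall>u. u \<notin> V \<longrightarrow> x u = 0}"
proof (intro equalityI subsetI CollectI allI impI)
  fix x u assume "x \<in> fvs.span (basisE ` V)" "u \<notin> V"
  moreover obtain c where "x = (\<Sum>b\<in>basisE ` V. sc (c b) b)"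
    using \<open>x \<in> _\<close> fvs.span_finite assms by auto
  ultimately show "x u = 0" using assms
    by (simp add: sum_fun_apply sc_def) (auto intro!: sum.neutral simp: basisE_def)
next
  fix x :: "'v \<Rightarrow> real" assume "x \<in> {x. \<forall>u. u \<notin> V \<longrightarrow> x u = 0}"
  then have "x = (\<Sum>w\<in>V. sc (x w) (basisE w))"
  proof (intro ext)
    fix u
    have "sc (x w) (basisE w) u = (if u = w then x w else 0)" for w
      by (simp add: sc_def basisE_def)
    then have "(\<Sum>w\<in>V. sc (x w) (basisE w)) u = (\<Sum>w\<in>V. if u = w then x w else 0)"
      using assms by (simp add: sum_fun_apply)
    then show "x u = (\<Sum>w\<in>V. sc (x w) (basisE w)) u"
      using assms \<open>x \<in> _\<close> by (simp add: sum.delta)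
  qed
  also have "\<dots> \<in> fvs.span (basisE ` V)"
    by (intro fvs.span_sum fvs.span_scale fvs.span_base) auto
  finally show "x \<in> fvs.span (basisE ` V)" .
qed

lemma independent_basisE: "finite V \<Longrightarrow> fvs.independent (basisE ` V)"
proof (induction V rule: finite_induct)
  case (insert v W)
  have "basisE v \<notin> fvs.span (basisE ` W)"
  proof
    assume "basisE v \<in> fvs.span (basisE ` W)"
    then have "basisE v v = 0" using insert by (simp add: span_basisE)
    then show False by (simp add: basisE_def)
  qed
  then show ?case using insert by (simp add: fvs.independent_insert)
qed (simp add: fvs.independent_empty)

lemma solvable_of_trivial_kernel:
  fixes V :: "'v set" and F :: "'v \<Rightarrow> 'v \<Rightarrow> real"
  assumes fin: "finite V"
    and ker: "\<And>x. \<forall>u. u \<notin> V \<longrightarrow> x u = 0 \<Longrightarrow> \<forall>w\<in>V. (\<Sum>u\<in>V. x u * F u w) = 0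
                \<Longrightarrow> \<forall>u\<in>V. x u = 0"
  shows "\<exists>x. (\<forall>u. u \<notin> V \<longrightarrow> x u = 0) \<and> (\<forall>w\<in>V. (\<Sum>u\<in>V. x u * F u w) = z w)"
proof -
  define T :: "('v \<Rightarrow> real) \<Rightarrow> 'v \<Rightarrow> real"
    where "T = (\<lambda>x w. if w \<in> V then (\<Sum>u\<in>V. x u * F u w) else 0)"
  let ?S = "fvs.span (basisE ` V)"
  have lin: "Vector_Spaces.linear sc sc T"
    unfolding linear_iff_module_hom
    by (rule module_hom.intro, unfold_locales)
       (auto simp: T_def sc_def fun_eq_iff sum.distrib sum_distrib_left algebra_simps)
  have inj: "inj_on T ?S"
  proof (rule inj_onI)
    fix x y assume xy: "x \<in> ?S" "y \<in> ?S" "T x = T y"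
    have supp: "\<forall>u. u \<notin> V \<longrightarrow> (x - y) u = 0"
      using xy(1,2) by (simp add: span_basisE[OF fin])
    have "(\<Sum>u\<in>V. (x - y) u * F u w) = T x w - T y w" if "w \<in> V" for w
      using that by (simp add: T_def algebra_simps sum_subtractf)
    then have "\<forall>w\<in>V. (\<Sum>u\<in>V. (x - y) u * F u w) = 0"
      using xy(3) by simp
    with ker[OF supp] supp have "(x - y) u = 0" for u
      by (cases "u \<in> V") simp_all
    then show "x = y" by (simp add: fun_eq_iff)
  qed
  have "T ` basisE ` V \<subseteq> ?S"
    by (auto simp: span_basisE[OF fin] T_def)
  then have onto: "?S \<subseteq> T ` ?S"
    by (rule fvs.span_subset_image_of_inj_on_span
        [OF lin finite_imageI[OF fin] independent_basisE[OF fin] _ inj])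
  have "(\<lambda>w. if w \<in> V then z w else 0) \<in> ?S"
    by (simp add: span_basisE[OF fin])
  with onto obtain x where x: "x \<in> ?S" and Tx: "(\<lambda>w. if w \<in> V then z w else 0) = T x"
    by (blast elim: imageE)
  show ?thesis
  proof (intro exI conjI ballI)
    show "\<forall>u. u \<notin> V \<longrightarrow> x u = 0" using x by (simp add: span_basisE[OF fin])
    fix w assume "w \<in> V"
    then show "(\<Sum>u\<in>V. x u * F u w) = z w" using fun_cong[OF Tx, of w] by (simp add: T_def)
  qed
qed

lemma pair_basisE:
  assumes "finite V" "w \<in> V"
  shows "pair V adj e x (basisE w) = (\<Sum>u\<in>V. x u * int_form adj e u w)"
proof -
  have "x u * basisE w v * int_form adj e u v = (if v = w then x u * int_form adj e u v else 0)"
    for u v by (simp add: basisE_def)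
  then show ?thesis using assms by (simp add: pair_def)
qed

lemma pair_conv_sum:
  "pair V adj e x z = (\<Sum>w\<in>V. z w * (\<Sum>u\<in>V. x u * int_form adj e u w))"
  unfolding pair_def by (subst sum.swap) (simp add: sum_distrib_left algebra_simps)

lemma pair_commute:
  assumes "graph_on V adj"
  shows "pair V adj e x z = pair V adj e z x"
proof -
  have "int_form adj e u w = int_form adj e w u" for u w
    using assms by (auto simp: int_form_def graph_on_def)
  then show ?thesis
    unfolding pair_def by (subst sum.swap) (simp add: algebra_simps)
qed

lemma neg_definite_kernel_trivial:
  assumes "neg_definite V adj e" and "\<forall>w\<in>V. (\<Sum>u\<in>V. x u * int_form adj e u w) = 0"
  shows "\<forall>u\<in>V. x u = 0"
proof (rule ccontr)
  assume "\<not> (\<forall>u\<in>V. x u = 0)"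
  then have "pair V adj e x x < 0" using assms(1) by (auto simp: neg_definite_def)
  moreover have "pair V adj e x x = 0" using assms(2) by (simp add: pair_conv_sum)
  ultimately show False by simp
qed

lemma dualE_solves:
  assumes fin: "finite V" and negdef: "neg_definite V adj e"
  shows "\<forall>u. u \<notin> V \<longrightarrow> dualE V adj e n u = 0"
    and "\<forall>w\<in>V. (\<Sum>u\<in>V. dualE V adj e n u * int_form adj e u w) = - (if n = w then 1 else 0)"
proof -
  let ?P = "\<lambda>c. (\<forall>u. u \<notin> V \<longrightarrow> c u = 0) \<and>
      (\<forall>w\<in>V. pair V adj e c (basisE w) = - (if n = w then 1 else 0))"
  have P_iff: "?P c \<longleftrightarrow> (\<forall>u. u \<notin> V \<longrightarrow> c u = 0) \<and>
      (\<forall>w\<in>V. (\<Sum>u\<in>V. c u * int_form adj e u w) = - (if n = w then 1 else 0))" for c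
    by (simp add: pair_basisE[OF fin])
  have "\<exists>c. ?P c"
    unfolding P_iff
    by (rule solvable_of_trivial_kernel[OF fin neg_definite_kernel_trivial[OF negdef]])
  moreover have "c = d" if "?P c" "?P d" for c d
  proof -
    have "\<forall>u\<in>V. (c - d) u = 0"
    proof (rule neg_definite_kernel_trivial[OF negdef])
      show "\<forall>w\<in>V. (\<Sum>u\<in>V. (c - d) u * int_form adj e u w) = 0"
        using that by (simp add: P_iff algebra_simps sum_subtractf)
    qed
    then have "(c - d) u = 0" for u
      using that by (cases "u \<in> V") auto
    then show ?thesis by (simp add: fun_eq_iff)
  qed
  ultimately have "\<exists>!c. ?P c" by blast
  then have "?P (dualE V adj e n)"
    unfolding dualE_def by (rule theI')
  then show "\<forall>u. u \<notin> V \<longrightarrow> dualE V adj e n u = 0"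
    and "\<forall>w\<in>V. (\<Sum>u\<in>V. dualE V adj e n u * int_form adj e u w) = - (if n = w then 1 else 0)"
    by (simp_all add: P_iff)
qed

lemma vfrak_eq_dualE:
  assumes g: "graph_on V adj" and negdef: "neg_definite V adj e" and m: "m \<in> nodes V adj"
  shows "vfrak V adj e n m = dualE V adj e n m"
proof -
  have fin: "finite V" and mV: "m \<in> V" using g m by (auto simp: graph_on_def nodes_def)
  have "pair V adj e (dualE V adj e n) (dualE V adj e m)
      = pair V adj e (dualE V adj e m) (dualE V adj e n)"
    by (rule pair_commute[OF g])
  also have "\<dots> = (\<Sum>w\<in>V. dualE V adj e n w * - (if m = w then 1 else 0))"
    using dualE_solves(2)[OF fin negdef] by (simp add: pair_conv_sum)
  also have "\<dots> = - dualE V adj e n m"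
    using mV fin by (simp add: sum_negf if_distrib[of "\<lambda>c. _ * c"] sum.delta cong: if_cong)
  finally show ?thesis using m by (simp add: vfrak_def)
qed

lemma quadratic_form_truncation_nonneg:
  fixes F :: "'v \<Rightarrow> 'v \<Rightarrow> real" and y :: "'v \<Rightarrow> real"
  assumes off_diag: "\<And>u v. u \<noteq> v \<Longrightarrow> F u v \<ge> 0"
    and super: "\<And>v. v \<in> S \<Longrightarrow> (\<Sum>u\<in>V. y u * F u v) \<le> 0"
    and boundary: "\<And>u v. v \<in> S \<Longrightarrow> u \<in> V - S \<Longrightarrow> F u v > 0 \<Longrightarrow> y u \<ge> 0"
  defines "w \<equiv> (\<lambda>u. if u \<in> S then min (y u) 0 else 0)"
  shows "(\<Sum>u\<in>V. \<Sum>v\<in>V. w u * w v * F u v) \<ge> 0"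
proof -
  \<comment> \<open>\<open>y - w \<ge> 0\<close> wherever \<open>F\<close> couples it to \<open>S\<close> off the diagonal, so \<open>(w, w) \<ge> (w, y) \<ge> 0\<close>.\<close>
  have termwise: "w v * y u * F u v \<le> w u * w v * F u v" if "u \<in> V" for u v
  proof (cases "v \<in> S")
    case vS: True
    have "w v * ((y u - w u) * F u v) \<le> 0"
    proof (cases "u = v")
      case False
      then have "(y u - w u) * F u v \<ge> 0"
        using off_diag[OF False] boundary[OF vS] \<open>u \<in> V\<close>
        by (cases "u \<in> S"; cases "F u v > 0") (auto simp: w_def)
      then show ?thesis using vS by (simp add: w_def mult_nonpos_nonneg)
    qed (auto simp: w_def min_def)
    then show ?thesis by (simp add: algebra_simps)
  qed (simp add: w_def)
  have "0 \<le> (\<Sum>v\<in>V. w v * (\<Sum>u\<in>V. y u * F u v))"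
    using super by (intro sum_nonneg) (auto simp: w_def mult_nonpos_nonpos)
  also have "\<dots> = (\<Sum>u\<in>V. \<Sum>v\<in>V. w v * y u * F u v)"
    by (subst sum.swap) (simp add: sum_distrib_left algebra_simps)
  also have "\<dots> \<le> (\<Sum>u\<in>V. \<Sum>v\<in>V. w u * w v * F u v)"
    by (intro sum_mono termwise)
  finally show ?thesis .
qed

lemma neg_definite_minimum_principle:
  assumes negdef: "neg_definite V adj e" and SV: "S \<subseteq> V"
    and super: "\<And>v. v \<in> S \<Longrightarrow> (\<Sum>u\<in>V. y u * int_form adj e u v) \<le> 0"
    and boundary: "\<And>u v. v \<in> S \<Longrightarrow> u \<in> V - S \<Longrightarrow> adj u v \<Longrightarrow> y u \<ge> 0"
    and v: "v \<in> S"
  shows "y v \<ge> 0"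
proof (rule ccontr)
  assume "\<not> y v \<ge> 0"
  define w where "w = (\<lambda>u. if u \<in> S then min (y u) 0 else 0)"
  have "w v \<noteq> 0" using \<open>\<not> y v \<ge> 0\<close> v by (simp add: w_def)
  then have "pair V adj e w w < 0" using negdef v SV by (auto simp: neg_definite_def)
  moreover have "pair V adj e w w \<ge> 0"
    unfolding pair_def w_def
  proof (rule quadratic_form_truncation_nonneg)
    show "int_form adj e u v \<ge> 0" if "u \<noteq> v" for u v
      using that by (simp add: int_form_def)
    show "y u \<ge> 0" if "v \<in> S" "u \<in> V - S" "int_form adj e u v > 0" for u v
      using that boundary by (auto simp: int_form_def split: if_splits)
  qed (rule super)
  ultimately show False by simp
qed

lemma is_path_segment:
  assumes p: "is_path adj p u w" and ij: "i \<le> j" "j < length p"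
  shows "is_path adj (drop i (take (Suc j) p)) (p ! i) (p ! j)"
proof -
  let ?s = "drop i (take (Suc j) p)"
  have len: "length ?s = Suc j - i" using ij by simp
  have nth: "?s ! k = p ! (i + k)" if "k < Suc j - i" for k
    using that ij by simp
  have "?s \<noteq> []" using len ij by auto
  moreover have "hd ?s = p ! i" using nth[of 0] ij \<open>?s \<noteq> []\<close> by (simp add: hd_conv_nth)
  moreover have "last ?s = p ! j" using nth[of "j - i"] ij \<open>?s \<noteq> []\<close> len by (simp add: last_conv_nth)
  moreover have "distinct ?s" using p by (simp add: is_path_def distinct_drop distinct_take)
  moreover have "adj (?s ! k) (?s ! Suc k)" if "Suc k < length ?s" for k
    using p that len nth[of k] nth[of "Suc k"] ij by (simp add: is_path_def)
  ultimately show ?thesis by (simp add: is_path_def)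
qed

lemma is_path_extend:
  assumes p: "is_path adj p s v" and a: "adj v u"
  obtains q where "is_path adj q s u" "set q \<subseteq> set p \<union> {u}"
proof (cases "u \<in> set p")
  case True
  then obtain k where k: "k < length p" "p ! k = u" by (auto simp: in_set_conv_nth)
  have "p ! 0 = s" using p by (auto simp: is_path_def hd_conv_nth[symmetric])
  then have "is_path adj (take (Suc k) p) s u"
    using is_path_segment[OF p le0 k(1)] k(2) by simp
  moreover have "set (take (Suc k) p) \<subseteq> set p" by (rule set_take_subset)
  ultimately show ?thesis using that by blast
next
  case False
  have "adj ((p @ [u]) ! k) ((p @ [u]) ! Suc k)" if k: "Suc k < length (p @ [u])" for k
  proof (cases "Suc k < length p")
    case True
    then show ?thesis using p by (simp add: is_path_def nth_append)
  next
    case False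
    then have "k = length p - 1" "p \<noteq> []" using k p by (auto simp: is_path_def)
    then show ?thesis using p a by (simp add: is_path_def nth_append last_conv_nth)
  qed
  then have "is_path adj (p @ [u]) s u"
    using p False by (auto simp: is_path_def)
  then show ?thesis using that by auto
qed

lemma valency_interior_ge_2:
  assumes g: "graph_on V adj" and p: "is_path adj p s t" and i: "0 < i" "i < length p - 1"
  shows "valency V adj (p ! i) \<ge> 2"
proof -
  have fin: "finite V" using g by (simp add: graph_on_def)
  have "adj (p ! i) (p ! (i - 1))" "adj (p ! i) (p ! Suc i)"
    using p g i by (auto simp: is_path_def graph_on_def dest: spec[of _ "i - 1"])
  then have "{p ! (i - 1), p ! Suc i} \<subseteq> {w \<in> V. adj (p ! i) w}"
    using g by (auto simp: graph_on_def)
  then have "card {p ! (i - 1), p ! Suc i} \<le> valency V adj (p ! i)"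
    unfolding valency_def using fin by (simp add: card_mono)
  moreover have "p ! (i - 1) \<noteq> p ! Suc i"
    using p i by (simp add: is_path_def nth_eq_iff_index_eq)
  ultimately show ?thesis by simp
qed

lemma orb_adj_of_path_segment:
  assumes tree: "is_tree V adj" and p: "is_path adj p s t" and qq: "q' < q" "q < length p"
    and nodes: "p ! q' \<in> nodes V adj" "p ! q \<in> nodes V adj"
    and between: "\<And>m. q' < m \<Longrightarrow> m < q \<Longrightarrow> p ! m \<notin> nodes V adj"
  shows "orb_adj V adj (p ! q') (p ! q)"
  unfolding orb_adj_def
proof (intro conjI nodes allI impI)
  have g: "graph_on V adj" using tree by (simp add: is_tree_def)
  let ?s = "drop q' (take (Suc q) p)"
  have s: "is_path adj ?s (p ! q') (p ! q)" using is_path_segment[OF p _ qq(2)] qq by simp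
  show "p ! q' \<noteq> p ! q" using p qq by (simp add: is_path_def nth_eq_iff_index_eq)
  fix r i assume r: "is_path adj r (p ! q') (p ! q)" and i: "0 < i \<and> i < length r - 1"
  have "\<exists>!r. is_path adj r (p ! q') (p ! q)" using tree nodes by (auto simp: is_tree_def nodes_def)
  then have rs: "r = ?s" using r s by blast
  then have ri: "r ! i = p ! (q' + i)" "q' + i < q" using i qq by auto
  then have "adj (p ! (q' + i)) (p ! Suc (q' + i))" using p qq by (simp add: is_path_def)
  then have "r ! i \<in> V - nodes V adj"
    using between[of "q' + i"] ri i g by (auto simp: graph_on_def)
  moreover have "valency V adj (r ! i) \<ge> 2" using valency_interior_ge_2[OF g r] i by blast
  ultimately show "valency V adj (r ! i) = 2" by (auto simp: nodes_def)
qed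

lemma path_previous_node:
  assumes tree: "is_tree V adj" and p: "is_path adj p s t" and q: "0 < q" "q < length p"
    and nodes: "p ! 0 \<in> nodes V adj" "p ! q \<in> nodes V adj"
  obtains q' where "q' < q" "p ! q' \<in> nodes V adj" "orb_adj V adj (p ! q') (p ! q)"
proof -
  let ?Q = "{m. m < q \<and> p ! m \<in> nodes V adj}"
  have Q: "finite ?Q" "0 \<in> ?Q" using q nodes by auto
  define q' where "q' = Max ?Q"
  have "q' \<in> ?Q" using Q Max_in q'_def by blast
  moreover have "p ! m \<notin> nodes V adj" if "q' < m" "m < q" for m
  proof
    assume "p ! m \<in> nodes V adj"
    then have "m \<le> q'" unfolding q'_def using that(2) Q(1) by (intro Max_ge) auto
    with that(1) show False by simp
  qed
  ultimately show ?thesis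
    using that orb_adj_of_path_segment[OF tree p _ q(2)] nodes(2) by blast
qed

lemma bamboo_path_same_side:
  assumes tree: "is_tree V adj" and ns: "set ns = nodes V adj" "distinct ns"
    and consecutive: "\<And>m m'. m < length ns \<Longrightarrow> m' < length ns \<Longrightarrow>
                        orb_adj V adj (ns ! m') (ns ! m) \<Longrightarrow> m' = m + 1 \<or> m = m' + 1"
    and p: "is_path adj p (ns ! i) (ns ! j)" and ij: "i < length ns" "j < length ns"
    and avoid: "ns ! r \<notin> set p"
  shows "i < r \<longleftrightarrow> j < r"
proof -
  have p0: "p ! 0 = ns ! i" and pl: "p ! (length p - 1) = ns ! j" and "p \<noteq> []"
    using p hd_conv_nth[of p] last_conv_nth[of p] by (auto simp: is_path_def)
  have index_side: "m < r \<longleftrightarrow> i < r" if "q < length p" "m < length ns" "p ! q = ns ! m" for q m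
    using that
  proof (induction q arbitrary: m rule: less_induct)
    case (less q)
    have "m \<noteq> r" using avoid less.prems nth_mem by metis
    show ?case
    proof (cases "q = 0")
      case True
      then show ?thesis using less.prems p0 ns(2) ij(1) by (simp add: nth_eq_iff_index_eq)
    next
      case False
      have "p ! 0 \<in> nodes V adj" "p ! q \<in> nodes V adj"
        using p0 less.prems ij(1) ns(1) by (auto simp flip: ns(1))
      then obtain q' where q': "q' < q" "p ! q' \<in> nodes V adj" "orb_adj V adj (p ! q') (p ! q)"
        using path_previous_node[OF tree p _ less.prems(1)] False by blast
      then obtain m' where m': "m' < length ns" "p ! q' = ns ! m'"
        using ns(1) by (metis in_set_conv_nth)
      have "m' \<noteq> r" using avoid m' q' less.prems(1) nth_mem by (metis order.strict_trans)
      moreover have "m' = m + 1 \<or> m = m' + 1"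
        using consecutive[OF less.prems(2) m'(1)] q'(3) m'(2) less.prems(3) by simp
      ultimately show ?thesis
        using less.IH[OF q'(1) _ m'] q'(1) less.prems(1) \<open>m \<noteq> r\<close> by auto
    qed
  qed
  show ?thesis using index_side[OF _ ij(2) pl] \<open>p \<noteq> []\<close> by simp
qed

lemma bamboo_no_negative_dip:
  assumes tree: "is_tree V adj" and negdef: "neg_definite V adj e"
    and ns: "set ns = nodes V adj" "distinct ns"
    and consecutive: "\<And>m m'. m < length ns \<Longrightarrow> m' < length ns \<Longrightarrow>
                        orb_adj V adj (ns ! m') (ns ! m) \<Longrightarrow> m' = m + 1 \<or> m = m' + 1"
    and super: "\<And>w. w \<in> V \<Longrightarrow> w \<noteq> ns ! 0 \<Longrightarrow> w \<noteq> ns ! (length ns - 1) \<Longrightarrow>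
                  (\<Sum>u\<in>V. y u * int_form adj e u w) \<le> 0"
    and l: "l1 < l2" "l2 < l3" "l3 < length ns"
    and nonneg: "y (ns ! l1) \<ge> 0" "y (ns ! l3) \<ge> 0"
  shows "y (ns ! l2) \<ge> 0"
proof -
  have g: "graph_on V adj" using tree by (simp add: is_tree_def)
  have nsV: "ns ! l \<in> V" if "l < length ns" for l
    using that nth_mem[of l ns] ns(1) by (auto simp: nodes_def)
  define S where "S = {v \<in> V. \<exists>p. is_path adj p (ns ! l2) v \<and> ns ! l1 \<notin> set p \<and> ns ! l3 \<notin> set p}"
  have distinct_nodes: "ns ! l2 \<noteq> ns ! l1" "ns ! l2 \<noteq> ns ! l3"
    using ns(2) l by (simp_all add: nth_eq_iff_index_eq)
  have "is_path adj [ns ! l2] (ns ! l2) (ns ! l2)" by (simp add: is_path_def)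
  then have l2S: "ns ! l2 \<in> S" using distinct_nodes nsV l by (auto simp: S_def)
  have first_out: "ns ! 0 \<notin> S"
  proof
    assume "ns ! 0 \<in> S"
    then obtain p where p: "is_path adj p (ns ! l2) (ns ! 0)" "ns ! l1 \<notin> set p"
      unfolding S_def by blast
    have len: "l2 < length ns" "0 < length ns" using l by auto
    have "l2 < l1 \<longleftrightarrow> 0 < l1"
      using bamboo_path_same_side[OF tree ns consecutive p(1) len p(2)] .
    then have "ns ! 0 = ns ! l1" using l by simp
    moreover have "ns ! 0 \<in> set p" using p(1) last_in_set[of p] by (simp add: is_path_def)
    ultimately show False using p(2) by simp
  qed
  have last_out: "ns ! (length ns - 1) \<notin> S"
  proof
    assume "ns ! (length ns - 1) \<in> S"
    then obtain p where p: "is_path adj p (ns ! l2) (ns ! (length ns - 1))" "ns ! l3 \<notin> set p"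
      unfolding S_def by blast
    have "l2 < l3 \<longleftrightarrow> length ns - 1 < l3"
      using bamboo_path_same_side[OF tree ns consecutive p(1) _ _ p(2)] l by simp
    then show False using l by simp
  qed
  have boundary: "y u \<ge> 0" if "v \<in> S" "u \<in> V - S" "adj u v" for u v
  proof -
    obtain p where p: "is_path adj p (ns ! l2) v" "ns ! l1 \<notin> set p" "ns ! l3 \<notin> set p"
      using \<open>v \<in> S\<close> unfolding S_def by blast
    obtain q where q: "is_path adj q (ns ! l2) u" "set q \<subseteq> set p \<union> {u}"
      using is_path_extend[OF p(1)] \<open>adj u v\<close> g by (metis graph_on_def)
    have "u = ns ! l1 \<or> u = ns ! l3"
      using q p that(2) unfolding S_def by blast
    then show ?thesis using nonneg by auto
  qed
  show ?thesis
    by (rule neg_definite_minimum_principle[OF negdef _ super boundary l2S])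
       (use first_out last_out in \<open>auto simp: S_def\<close>)
qed

lemma dualE_combination_superharmonic:
  fixes ns :: "'v list" and a :: "nat \<Rightarrow> real" and b c :: real
  assumes fin: "finite V" and negdef: "neg_definite V adj e"
    and a_nonneg: "\<forall>l < length ns. a l \<ge> 0"
    and w: "w \<noteq> s" "w \<noteq> t" "w \<in> V"
  defines "y \<equiv> \<lambda>u. (\<Sum>l < length ns. a l * dualE V adj e (ns ! l) u)
                 - b * dualE V adj e s u - c * dualE V adj e t u"
  shows "(\<Sum>u\<in>V. y u * int_form adj e u w) \<le> 0"
proof -
  let ?L = "\<lambda>n. \<Sum>u\<in>V. dualE V adj e n u * int_form adj e u w"
  have L: "?L n = - (if n = w then 1 else 0)" for n
    using dualE_solves(2)[OF fin negdef] w(3) by blast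
  have "(\<Sum>u\<in>V. y u * int_form adj e u w) = (\<Sum>l < length ns. a l * ?L (ns ! l)) - b * ?L s - c * ?L t"
    unfolding y_def
    by (simp add: algebra_simps sum_subtractf sum.distrib sum_distrib_left sum_distrib_right
        sum.swap[of _ V "{..<length ns}"])
  also have "\<dots> = - (\<Sum>l < length ns. if ns ! l = w then a l else 0)"
    using w by (simp add: L sum_negf if_distrib[of "\<lambda>x. _ * x"] cong: if_cong)
  also have "\<dots> \<le> 0"
    using a_nonneg by (simp, intro sum_nonneg) auto
  finally show ?thesis .
qed

lemma interval_of_convex_index_set:
  fixes P :: "nat \<Rightarrow> bool"
  assumes l0: "l0 < N" "P l0"
    and convex: "\<And>l1 l2 l3. l1 < l2 \<Longrightarrow> l2 < l3 \<Longrightarrow> l3 < N \<Longrightarrow> P l1 \<Longrightarrow> P l3 \<Longrightarrow> P l2"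
  shows "\<exists>i j. i \<le> j \<and> j < N \<and> (\<forall>l < i. \<not> P l) \<and> (\<forall>l. i \<le> l \<and> l \<le> j \<longrightarrow> P l)
           \<and> (\<forall>l. j < l \<and> l < N \<longrightarrow> \<not> P l)"
proof -
  let ?Q = "\<lambda>l. l < N \<and> P l"
  define i where "i = (LEAST l. ?Q l)"
  define j where "j = (GREATEST l. ?Q l)"
  have bound: "\<forall>l. ?Q l \<longrightarrow> l \<le> N" by auto
  have i: "?Q i" "i \<le> l0" using l0 LeastI[of ?Q l0] Least_le[of ?Q l0] by (auto simp: i_def)
  have j: "?Q j" "l0 \<le> j"
    using l0 GreatestI_nat[of ?Q l0 N] Greatest_le_nat[of ?Q l0 N] bound by (auto simp: j_def)
  have below: "\<not> P l" if "l < i" for l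
    using that not_less_Least[of l ?Q] i j by (auto simp: i_def)
  have above: "\<not> P l" if "j < l" "l < N" for l
    using that Greatest_le_nat[of ?Q l N] bound by (auto simp: j_def)
  have inside: "P l" if "i \<le> l" "l \<le> j" for l
    using that convex[of i l j] i j by (cases "l = i \<or> l = j") auto
  show ?thesis using i j below above inside by (intro exI[of _ i] exI[of _ j]) auto
qed

theorem mainTheorem5:
  fixes V :: "'v set" and adj :: "'v \<Rightarrow> 'v \<Rightarrow> bool" and e :: "'v \<Rightarrow> int"
    and ns :: "'v list" and a :: "nat \<Rightarrow> real" and b1 bk :: real
    and \<alpha> \<beta> :: "'v \<Rightarrow> real"
  assumes tree: "is_tree V adj"
    and negdef: "neg_definite V adj e"
    and ns_distinct: "distinct ns"
    and ns_nodes: "set ns = nodes V adj"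
    and bamboo: "\<forall>p < length ns. \<forall>q < length ns.
                   orb_adj V adj (ns ! p) (ns ! q) \<longleftrightarrow> (p = q + 1 \<or> q = p + 1)"
    and a_nonneg: "\<forall>l < length ns. a l \<ge> 0"
    and alpha_def: "\<alpha> = (\<lambda>m. \<Sum>l < length ns. a l * vfrak V adj e (ns ! l) m)"
    and b_nonneg: "b1 \<ge> 0" "bk \<ge> 0"
    and beta_def: "\<beta> = (\<lambda>m. \<alpha> m - b1 * vfrak V adj e (ns ! 0) m
                                 - bk * vfrak V adj e (ns ! (length ns - 1)) m)"
    and not_all_neg: "\<exists>l < length ns. \<beta> (ns ! l) \<ge> 0"
  shows "\<exists>i j. i \<le> j \<and> j < length ns \<and>
           (\<forall>l < i. \<beta> (ns ! l) < 0) \<and>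
           (\<forall>l. i \<le> l \<and> l \<le> j \<longrightarrow> \<beta> (ns ! l) \<ge> 0) \<and>
           (\<forall>l. j < l \<and> l < length ns \<longrightarrow> \<beta> (ns ! l) < 0)"
proof -
  have g: "graph_on V adj" and fin: "finite V" using tree by (auto simp: is_tree_def graph_on_def)
  define y where "y = (\<lambda>u. (\<Sum>l < length ns. a l * dualE V adj e (ns ! l) u)
      - b1 * dualE V adj e (ns ! 0) u - bk * dualE V adj e (ns ! (length ns - 1)) u)"
  have "\<beta> (ns ! l) = y (ns ! l)" if "l < length ns" for l
  proof -
    have "ns ! l \<in> nodes V adj" using that ns_nodes nth_mem by blast
    then show ?thesis
      by (simp add: beta_def alpha_def y_def vfrak_eq_dualE[OF g negdef])
  qed
  moreover have "y (ns ! l2) \<ge> 0"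
    if "l1 < l2" "l2 < l3" "l3 < length ns" "y (ns ! l1) \<ge> 0" "y (ns ! l3) \<ge> 0" for l1 l2 l3
    using bamboo_no_negative_dip[OF tree negdef ns_nodes ns_distinct _ _ that] bamboo
          dualE_combination_superharmonic[OF fin negdef a_nonneg] by (auto simp: y_def)
  ultimately have "\<beta> (ns ! l2) \<ge> 0"
    if "l1 < l2" "l2 < l3" "l3 < length ns" "\<beta> (ns ! l1) \<ge> 0" "\<beta> (ns ! l3) \<ge> 0" for l1 l2 l3
    using that by auto
  then show ?thesis
    using interval_of_convex_index_set[of _ "length ns" "\<lambda>l. \<beta> (ns ! l) \<ge> 0"] not_all_neg
    by (auto simp: not_le)
qed

end
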